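(* Let $(f,g),(f',g')\in\Theta$ both be $\tau$-lower bounded for some $\tau>0$. Then $$d_{\mathrm{logit}}^2(p_{f,g},p_{f',g'})\le 2|\log\tau|\;\mathcal L^1_{\mathrm{logit}}(p_{f,g},p_{f',g'}),\qquad\text{where }\ \mathcal L^1_{\mathrm{logit}}(p_{f,g},p_{f',g'})=\mathbb E_{x\sim p_x}\|u(x)-u'(x)\|_1.$$
   Context: Model class $\Theta$: pairs $(f,g)$, $f:\mathcal X\to\mathbb R^m$, $g:\mathcal Y\to\mathbb R^m$, $\mathcal Y$ finite with $k$ labels, $\sum_y g(y)=0$, inducing $p_{f,g}(y\mid x)\propto\exp(f(x)^\top g(y))$; $p_x$ is the data distribution. Logits $u(x)=(f(x)^\top g(y))_{y\in\mathcal Y}$; $d_{\mathrm{logit}}^2=\mathbb E_{x\sim p_x}\|u(x)-u'(x)\|_2^2$. $\tau$-lower bounded: $\min_y p_{f,g}(y\mid x)\ge\tau$ for $p_x$-a.e. $x$. (The two models may have different representation dimensions.) *)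

theory Defs
  imports "HOL-Probability.Probability"
begin

(* Label set Y = the finite type 'y; representations f : X -> R^m, g : Y -> R^m,
   with R^m = real^'m (dimension CARD('m)). *)

definition in_Theta :: "('x \<Rightarrow> real^'m) \<Rightarrow> ('y::finite \<Rightarrow> real^'m) \<Rightarrow> bool" where
  "in_Theta f g \<longleftrightarrow> (\<Sum>y\<in>UNIV. g y) = 0"

definition logits :: "('x \<Rightarrow> real^'m) \<Rightarrow> ('y::finite \<Rightarrow> real^'m) \<Rightarrow> 'x \<Rightarrow> 'y \<Rightarrow> real" where
  "logits f g x y = f x \<bullet> g y"

definition cond_prob :: "('x \<Rightarrow> real^'m) \<Rightarrow> ('y::finite \<Rightarrow> real^'m) \<Rightarrow> 'x \<Rightarrow> 'y \<Rightarrow> real" where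
  "cond_prob f g x y = exp (f x \<bullet> g y) / (\<Sum>y'\<in>UNIV. exp (f x \<bullet> g y'))"

definition tau_lower_bounded :: "'x measure \<Rightarrow> real \<Rightarrow> ('x \<Rightarrow> real^'m) \<Rightarrow> ('y::finite \<Rightarrow> real^'m) \<Rightarrow> bool" where
  "tau_lower_bounded M \<tau> f g \<longleftrightarrow> (AE x in M. Min (range (cond_prob f g x)) \<ge> \<tau>)"

definition d_logit_sq :: "'x measure \<Rightarrow> ('x \<Rightarrow> 'y::finite \<Rightarrow> real) \<Rightarrow> ('x \<Rightarrow> 'y \<Rightarrow> real) \<Rightarrow> real" where
  "d_logit_sq M u u' = (\<integral>x. (\<Sum>y\<in>UNIV. (u x y - u' x y)\<^sup>2) \<partial>M)"

definition L1_logit :: "'x measure \<Rightarrow> ('x \<Rightarrow> 'y::finite \<Rightarrow> real) \<Rightarrow> ('x \<Rightarrow> 'y \<Rightarrow> real) \<Rightarrow> real" where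
  "L1_logit M u u' = (\<integral>x. (\<Sum>y\<in>UNIV. \<bar>u x y - u' x y\<bar>) \<partial>M)"

end

theory Submission
  imports Defs
begin

(* A tau-lower bound on the softmax probabilities confines every centred logit to
   [ln tau, -ln tau]. Hence |u - u'| <= 2 |ln tau| pointwise, and
   (u - u')^2 <= 2 |ln tau| |u - u'|; integrating gives the claim. *)

text \<open>With \<open>L = ln (\<Sum>y. exp (u y))\<close> one has \<open>ln \<tau> + L \<le> u y \<le> L\<close>; summing over \<open>y\<close> and
  using \<open>\<Sum>y. u y = 0\<close> yields \<open>0 \<le> L \<le> - ln \<tau>\<close>.\<close>

lemma abs_le_neg_ln_if_softmax_ge:
  fixes u :: "'y::finite \<Rightarrow> real"
  assumes centred: "(\<Sum>y\<in>UNIV. u y) = 0" and "\<tau> > 0"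
    and softmax_ge: "\<And>y. \<tau> \<le> exp (u y) / (\<Sum>y'\<in>UNIV. exp (u y'))"
  shows "\<bar>u y\<bar> \<le> - ln \<tau>"
proof -
  define S where "S = (\<Sum>y'\<in>UNIV. exp (u y'))"
  define L where "L = ln S"
  have "S > 0"
    unfolding S_def by (intro sum_pos) auto
  have upper: "u z \<le> L" for z
  proof -
    have "exp (u z) \<le> S"
      unfolding S_def by (rule member_le_sum) auto
    then show ?thesis
      using \<open>S > 0\<close> unfolding L_def by (metis exp_le_cancel_iff exp_ln)
  qed
  have lower: "ln \<tau> + L \<le> u z" for z
  proof -
    have "ln \<tau> \<le> ln (exp (u z) / S)"
      using softmax_ge[of z] \<open>\<tau> > 0\<close> \<open>S > 0\<close> unfolding S_def[symmetric] by simp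
    then show ?thesis
      using \<open>S > 0\<close> unfolding L_def by (simp add: ln_div)
  qed
  have card_pos: "real CARD('y) > 0"
    by simp
  have "0 \<le> real CARD('y) * L"
    using sum_mono[of UNIV u "\<lambda>_. L"] upper centred by simp
  then have "0 \<le> L"
    using card_pos by (simp add: zero_le_mult_iff)
  have "real CARD('y) * (ln \<tau> + L) \<le> 0"
    using sum_mono[of UNIV "\<lambda>_. ln \<tau> + L" u] lower centred by simp
  then have "L \<le> - ln \<tau>"
    using card_pos by (simp add: mult_le_0_iff)
  show ?thesis
    using upper[of y] lower[of y] \<open>0 \<le> L\<close> \<open>L \<le> - ln \<tau>\<close> by linarith
qed

lemma abs_logits_le_if_tau_lower_bound:
  fixes f :: "'x \<Rightarrow> real^'m" and g :: "'y::finite \<Rightarrow> real^'m"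
  assumes "in_Theta f g" and "\<tau> > 0" and "Min (range (cond_prob f g x)) \<ge> \<tau>"
  shows "\<bar>logits f g x y\<bar> \<le> \<bar>ln \<tau>\<bar>"
proof -
  have "\<bar>logits f g x y\<bar> \<le> - ln \<tau>"
  proof (rule abs_le_neg_ln_if_softmax_ge)
    show "(\<Sum>y\<in>UNIV. logits f g x y) = 0"
      using assms(1) unfolding in_Theta_def logits_def by (simp flip: inner_sum_right)
    show "\<tau> > 0" by fact
    fix z
    have "Min (range (cond_prob f g x)) \<le> cond_prob f g x z"
      by (rule Min_le) auto
    then show "\<tau> \<le> exp (logits f g x z) / (\<Sum>y'\<in>UNIV. exp (logits f g x y'))"
      using assms(3) unfolding cond_prob_def logits_def by simp
  qed
  then show ?thesis
    by linarith
qed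

lemma square_diff_le_if_abs_le:
  fixes a b c :: real
  assumes "\<bar>a\<bar> \<le> c" and "\<bar>b\<bar> \<le> c"
  shows "(a - b)\<^sup>2 \<le> 2 * c * \<bar>a - b\<bar>"
proof -
  have "(a - b)\<^sup>2 = \<bar>a - b\<bar> * \<bar>a - b\<bar>"
    by (simp add: power2_eq_square)
  also have "\<dots> \<le> 2 * c * \<bar>a - b\<bar>"
    using assms by (intro mult_right_mono) auto
  finally show ?thesis .
qed

lemma d_logit_sq_le_L1_logit_if_AE_bounded:
  fixes u v :: "'x \<Rightarrow> 'y::finite \<Rightarrow> real"
  assumes "finite_measure M"
    and meas_u: "\<And>y. (\<lambda>x. u x y) \<in> borel_measurable M"
    and meas_v: "\<And>y. (\<lambda>x. v x y) \<in> borel_measurable M"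
    and bounded: "AE x in M. \<forall>y. \<bar>u x y\<bar> \<le> c \<and> \<bar>v x y\<bar> \<le> c"
  shows "d_logit_sq M u v \<le> 2 * c * L1_logit M u v"
proof -
  interpret finite_measure M by fact
  let ?l1 = "\<lambda>x. \<Sum>y\<in>UNIV. \<bar>u x y - v x y\<bar>"
  have "integrable M ?l1"
  proof (rule integrable_const_bound[where B = "real CARD('y) * (2 * c)"])
    show "AE x in M. norm (?l1 x) \<le> real CARD('y) * (2 * c)"
      using bounded
    proof eventually_elim
      case (elim x)
      have "?l1 x \<le> (\<Sum>y\<in>(UNIV::'y set). 2 * c)"
      proof (intro sum_mono)
        fix y
        show "\<bar>u x y - v x y\<bar> \<le> 2 * c"
          using elim[rule_format, of y] by linarith
      qed
      then show ?case
        by (simp add: sum_nonneg)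
    qed
    show "?l1 \<in> borel_measurable M"
      using meas_u meas_v by measurable
  qed
  have "d_logit_sq M u v \<le> (\<integral>x. 2 * c * ?l1 x \<partial>M)"
    unfolding d_logit_sq_def
  proof (rule integral_mono_AE')
    show "integrable M (\<lambda>x. 2 * c * ?l1 x)"
      using \<open>integrable M ?l1\<close> by simp
    show "AE x in M. (\<Sum>y\<in>UNIV. (u x y - v x y)\<^sup>2) \<le> 2 * c * ?l1 x"
      using bounded
    proof eventually_elim
      case (elim x)
      have "(\<Sum>y\<in>UNIV. (u x y - v x y)\<^sup>2) \<le> (\<Sum>y\<in>UNIV. 2 * c * \<bar>u x y - v x y\<bar>)"
        using elim by (intro sum_mono square_diff_le_if_abs_le) auto
      then show ?case
        by (simp add: sum_distrib_left)
    qed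
    show "AE x in M. 0 \<le> 2 * c * ?l1 x"
      using bounded
    proof eventually_elim
      case (elim x)
      then have "0 \<le> c"
        by (meson abs_ge_zero order_trans)
      then show ?case
        by (simp add: sum_nonneg)
    qed
  qed
  also have "\<dots> = 2 * c * L1_logit M u v"
    unfolding L1_logit_def by simp
  finally show ?thesis .
qed

theorem mainTheorem8:
  fixes M :: "'x measure"
    and f :: "'x \<Rightarrow> real^'m" and g :: "'y::finite \<Rightarrow> real^'m"
    and f' :: "'x \<Rightarrow> real^'n" and g' :: "'y \<Rightarrow> real^'n"
    and \<tau> :: real
  assumes "prob_space M"
    and "f \<in> borel_measurable M" and "f' \<in> borel_measurable M"
    and "in_Theta f g" and "in_Theta f' g'"
    and "\<tau> > 0"
    and "tau_lower_bounded M \<tau> f g" and "tau_lower_bounded M \<tau> f' g'"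
  shows "d_logit_sq M (logits f g) (logits f' g')
           \<le> 2 * \<bar>ln \<tau>\<bar> * L1_logit M (logits f g) (logits f' g')"
proof (rule d_logit_sq_le_L1_logit_if_AE_bounded)
  show "finite_measure M"
    using \<open>prob_space M\<close> by (rule prob_space.finite_measure)
  show "(\<lambda>x. logits f g x y) \<in> borel_measurable M" for y
    unfolding logits_def using assms(2) by measurable
  show "(\<lambda>x. logits f' g' x y) \<in> borel_measurable M" for y
    unfolding logits_def using assms(3) by measurable
  show "AE x in M. \<forall>y. \<bar>logits f g x y\<bar> \<le> \<bar>ln \<tau>\<bar> \<and> \<bar>logits f' g' x y\<bar> \<le> \<bar>ln \<tau>\<bar>"
    using assms(7,8) unfolding tau_lower_bounded_def
    by eventually_elim
      (simp add: abs_logits_le_if_tau_lower_bound[OF assms(4,6)]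
        abs_logits_le_if_tau_lower_bound[OF assms(5,6)])
qed

end
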